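(* Let $T$ be a location measure defined on (the distributions of) all real random variables with finite variance, and suppose $T$ is additive, i.e. $T(x+y)=T(x)+T(y)$ for all independent $x,y$ with finite variances. Suppose $T$ is continuous at $N(0,1)$: whenever $z_n\to_d z\sim N(0,1)$ (with each $z_n$ of finite variance), $T(z_n)\to T(z)=0$. Then $T(x)=E(x)$ for every real random variable $x$ with finite second moment.
   Context: A location measure is a map $T$ from (distributions of) real random variables to $\mathbb{R}$, depending only on the distribution of its argument, such that $T(ax+b)=aT(x)+b$ for all $a,b\in\mathbb{R}$. *)

theory Defs
  imports "HOL-Probability.Probability"
begin

definition finvar_dists :: "real measure set" where
  "finvar_dists = {M. real_distribution M \<and> integrable M (\<lambda>x. x^2)}"

definition location_measure :: "(real measure \<Rightarrow> real) \<Rightarrow> bool" where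
  "location_measure T \<longleftrightarrow>
     (\<forall>M\<in>finvar_dists. \<forall>a b::real.
        T (distr M borel (\<lambda>x. a * x + b)) = a * T M + b)"

text \<open>Additivity: the law of x + y for independent x, y is the convolution of the laws.\<close>
definition additive_location :: "(real measure \<Rightarrow> real) \<Rightarrow> bool" where
  "additive_location T \<longleftrightarrow>
     (\<forall>M\<in>finvar_dists. \<forall>N\<in>finvar_dists. T (M \<star> N) = T M + T N)"

end

theory Submission
  imports Defs
begin

text \<open>
  Let \<open>x\<^sub>1, x\<^sub>2, \<dots>\<close> be i.i.d. copies of \<open>x\<close> with mean \<open>m\<close> and variance \<open>\<sigma>\<^sup>2 > 0\<close>.
  Additivity gives \<open>T(x\<^sub>1 + \<dots> + x\<^sub>n) = n T(x)\<close>, so by the location property the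
  standardised sum \<open>z\<^sub>n = (x\<^sub>1 + \<dots> + x\<^sub>n - n m) / (\<sigma> \<surd>n)\<close> has
  \<open>T(z\<^sub>n) = \<surd>n (T(x) - m) / \<sigma>\<close>. By the central limit theorem \<open>z\<^sub>n\<close> converges in
  distribution to \<open>N(0,1)\<close>, so continuity forces \<open>T(z\<^sub>n) \<longrightarrow> 0\<close>, which is only possible
  if \<open>T(x) = m\<close>. Degenerate \<open>x\<close> (variance zero) is almost surely constant and is handled
  by the location property alone.
\<close>

lemma finvar_distsD:
  assumes "M \<in> finvar_dists"
  shows "real_distribution M" and "integrable M (\<lambda>x. x)" and "integrable M (\<lambda>x. x^2)"
    and "integrable M (\<lambda>x. (x - c)^2)"
proof -
  show M: "real_distribution M" and sq: "integrable M (\<lambda>x. x^2)"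
    using assms by (simp_all add: finvar_dists_def)
  interpret real_distribution M by (fact M)
  show id: "integrable M (\<lambda>x. x)"
    by (rule square_integrable_imp_integrable[OF _ sq]) simp
  have "integrable M (\<lambda>x. x^2 - 2 * c * x + c^2)"
    using id sq by auto
  then show "integrable M (\<lambda>x. (x - c)^2)"
    by (simp add: power2_diff algebra_simps)
qed

lemma finvar_dists_distr_affine:
  assumes "M \<in> finvar_dists"
  shows "distr M borel (\<lambda>x. a * x + b) \<in> finvar_dists"
proof -
  note M = finvar_distsD[OF assms]
  interpret real_distribution M by (fact M(1))
  have "integrable M (\<lambda>x. a^2 * x^2 + 2*a*b * x + b^2)"
    using M(2,3) by auto
  then have "integrable M (\<lambda>x. (a * x + b)^2)"
    by (simp add: power2_eq_square algebra_simps)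
  then show ?thesis
    by (simp add: finvar_dists_def integrable_distr_eq real_distribution_distr)
qed

lemma location_measure_AE_const:
  assumes "location_measure T" and "M \<in> finvar_dists" and "AE x in M. x = c"
  shows "T M = c"
proof -
  interpret real_distribution M using finvar_distsD(1)[OF assms(2)] .
  have "distr M borel (\<lambda>x. 0 * x + c) = distr M borel (\<lambda>x. x)"
    using assms(3) by (intro distr_cong_AE) auto
  also have "\<dots> = M" by (rule distr_id2) simp
  finally show ?thesis
    using assms(1,2) unfolding location_measure_def by (metis mult_zero_left add_0)
qed

lemma AE_eq_if_integral_square_diff_eq_0:
  fixes c :: real
  assumes "integrable M (\<lambda>x. (x - c)^2)" and "(\<integral>x. (x - c)^2 \<partial>M) = 0"
  shows "AE x in M. x = c"
  using assms by (subst (asm) integral_nonneg_eq_0_iff_AE) auto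

lemma real_distribution_iid_sequence:
  assumes "real_distribution \<mu>"
  obtains P :: "(nat \<Rightarrow> real) measure" and X :: "nat \<Rightarrow> (nat \<Rightarrow> real) \<Rightarrow> real"
  where "prob_space P" and "prob_space.indep_vars P (\<lambda>_. borel) X UNIV"
    and "\<And>i. distr P borel (X i) = \<mu>"
proof
  interpret \<mu>: real_distribution \<mu> by fact
  interpret product_prob_space "\<lambda>_::nat. \<mu>" UNIV
    by (simp add: product_prob_space_def product_prob_space_axioms_def product_sigma_finite_def
        \<mu>.prob_space_axioms \<mu>.sigma_finite_measure)
  define P where "P = PiM (UNIV :: nat set) (\<lambda>_. \<mu>)"
  show P: "prob_space P"
    unfolding P_def by (rule prob_space_axioms)
  have "(\<lambda>\<omega>. \<omega> i) \<in> measurable P \<mu>" for i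
    unfolding P_def by (rule measurable_component_singleton) simp
  then have [measurable]: "(\<lambda>\<omega>. \<omega> i) \<in> borel_measurable P" for i
    using measurable_cong_sets[OF refl \<mu>.events_eq_borel, of P] by simp
  have "distr P \<mu> (\<lambda>\<omega>. \<omega> i) = \<mu>" for i
    unfolding P_def by (rule distr_PiM_component) (auto simp: \<mu>.prob_space_axioms)
  moreover have "distr P borel (\<lambda>\<omega>. \<omega> i) = distr P \<mu> (\<lambda>\<omega>. \<omega> i)" for i
    by (rule distr_cong) (auto simp only: \<mu>.events_eq_borel)
  ultimately show law: "distr P borel (\<lambda>\<omega>. \<omega> i) = \<mu>" for i
    by simp
  have "distr P (PiM UNIV (\<lambda>_. borel)) (\<lambda>\<omega>. \<lambda>i\<in>UNIV. \<omega> i) = P"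
    unfolding restrict_UNIV
    by (rule distr_id2) (unfold P_def, rule sets_PiM_cong, simp_all only: \<mu>.events_eq_borel)
  also have "\<dots> = PiM UNIV (\<lambda>i. distr P borel (\<lambda>\<omega>. \<omega> i))"
    unfolding law by (simp only: P_def)
  finally show "prob_space.indep_vars P (\<lambda>_. borel) (\<lambda>i \<omega>. \<omega> i) UNIV"
    by (subst prob_space.indep_vars_iff_distr_eq_PiM[OF P]) simp_all
qed

lemma integrable_square_sum:
  fixes X :: "'i \<Rightarrow> 'a \<Rightarrow> real"
  assumes "\<And>i. i \<in> I \<Longrightarrow> X i \<in> borel_measurable M"
    and "\<And>i. i \<in> I \<Longrightarrow> integrable M (\<lambda>\<omega>. (X i \<omega>)^2)"
  shows "integrable M (\<lambda>\<omega>. (\<Sum>i\<in>I. X i \<omega>)^2)"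
proof (rule Bochner_Integration.integrable_bound)
  show "integrable M (\<lambda>\<omega>. (\<Sum>i\<in>I. (X i \<omega>)^2) * card I)"
    using assms(2) by auto
  show "(\<lambda>\<omega>. (\<Sum>i\<in>I. X i \<omega>)^2) \<in> borel_measurable M"
    using assms(1) by simp
  show "AE \<omega> in M. norm ((\<Sum>i\<in>I. X i \<omega>)^2) \<le> norm ((\<Sum>i\<in>I. (X i \<omega>)^2) * card I)"
    by (intro AE_I2) (simp add: abs_of_nonneg sum_nonneg sum_squared_le_sum_of_squares)
qed

lemma (in prob_space) finvar_dists_distr_sum:
  assumes "\<And>i. random_variable borel (X i)" and "\<And>i. distr M borel (X i) \<in> finvar_dists"
  shows "distr M borel (\<lambda>\<omega>. \<Sum>i\<in>I. X i \<omega>) \<in> finvar_dists"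
proof -
  have "integrable M (\<lambda>\<omega>. (X i \<omega>)^2)" for i
    using finvar_distsD(3)[OF assms(2)] by (simp add: integrable_distr_eq[OF assms(1)])
  then have "integrable M (\<lambda>\<omega>. (\<Sum>i\<in>I. X i \<omega>)^2)"
    using assms(1) by (intro integrable_square_sum) auto
  then show ?thesis
    using assms(1) by (simp add: finvar_dists_def integrable_distr_eq real_distribution_distr)
qed

lemma (in prob_space) additive_location_distr_sum:
  fixes X :: "nat \<Rightarrow> 'a \<Rightarrow> real"
  assumes loc: "location_measure T" and add: "additive_location T"
    and indep: "indep_vars (\<lambda>_. borel) X UNIV"
    and law: "\<And>i. distr M borel (X i) = \<mu>" and \<mu>: "\<mu> \<in> finvar_dists"
  shows "T (distr M borel (\<lambda>\<omega>. \<Sum>i<n. X i \<omega>)) = real n * T \<mu>"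
proof -
  have [measurable]: "random_variable borel (X i)" for i
    using indep unfolding indep_vars_def2 by simp
  show ?thesis
  proof (induction n)
    case 0
    have "T (distr M borel (\<lambda>\<omega>. \<Sum>i\<in>{..<0}. X i \<omega>)) = 0"
      by (rule location_measure_AE_const[OF loc finvar_dists_distr_sum])
        (auto simp: law \<mu> AE_distr_iff)
    then show ?case by simp
  next
    case (Suc n)
    have "indep_var borel (X n) borel (\<lambda>\<omega>. \<Sum>i<n. X i \<omega>)"
      by (rule indep_vars_sum) (auto intro: indep_vars_subset[OF indep])
    then have "distr M borel (\<lambda>\<omega>. X n \<omega> + (\<Sum>i<n. X i \<omega>))
        = (\<mu> \<star> distr M borel (\<lambda>\<omega>. \<Sum>i<n. X i \<omega>))"
      by (simp add: sum_indep_random_variable law)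
    moreover have "(\<lambda>\<omega>. \<Sum>i<Suc n. X i \<omega>) = (\<lambda>\<omega>. X n \<omega> + (\<Sum>i<n. X i \<omega>))"
      by (simp add: add.commute)
    ultimately show ?case
      using add \<mu> finvar_dists_distr_sum[of X] law Suc.IH
      by (simp add: additive_location_def algebra_simps)
  qed
qed

lemma sqrt_real_mult_LIMSEQ_imp_zero:
  fixes c :: real
  assumes "(\<lambda>n. sqrt (real n) * c) \<longlonglongrightarrow> L"
  shows "c = 0"
proof -
  have "(\<lambda>n. inverse (sqrt (real n))) \<longlonglongrightarrow> 0"
    by (intro tendsto_inverse_0_at_top filterlim_compose[OF sqrt_at_top filterlim_real_sequentially])
  with assms have "(\<lambda>n. sqrt (real n) * c * inverse (sqrt (real n))) \<longlonglongrightarrow> L * 0"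
    by (rule tendsto_mult)
  moreover have "eventually (\<lambda>n. sqrt (real n) * c * inverse (sqrt (real n)) = c) sequentially"
    by (rule eventually_sequentiallyI[of 1]) simp
  ultimately have "(\<lambda>n. c) \<longlonglongrightarrow> 0"
    by (simp add: tendsto_cong)
  then show ?thesis
    by (simp add: LIMSEQ_const_iff)
qed

lemma (in prob_space) location_measure_eq_mean_if_iid:
  fixes X :: "nat \<Rightarrow> 'a \<Rightarrow> real"
  assumes loc: "location_measure T" and add: "additive_location T"
    and cont: "\<And>Z. (\<forall>n. Z n \<in> finvar_dists) \<Longrightarrow> weak_conv_m Z std_normal_distribution \<Longrightarrow>
                 (\<lambda>n. T (Z n)) \<longlonglongrightarrow> T std_normal_distribution"
    and T0: "T std_normal_distribution = 0"
    and indep: "indep_vars (\<lambda>_. borel) X UNIV"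
    and law: "\<And>i. distr M borel (X i) = \<mu>" and \<mu>: "\<mu> \<in> finvar_dists"
    and \<sigma>: "\<sigma> > 0" and var: "(\<integral>x. (x - (\<integral>x. x \<partial>\<mu>))^2 \<partial>\<mu>) = \<sigma>^2"
  shows "T \<mu> = (\<integral>x. x \<partial>\<mu>)"
proof -
  define m where "m = (\<integral>x. x \<partial>\<mu>)"
  have X[measurable]: "random_variable borel (X i)" for i
    using indep unfolding indep_vars_def2 by simp
  have square_integrable: "integrable M (\<lambda>\<omega>. (X i \<omega>)^2)" for i
    using finvar_distsD(3)[OF \<mu>] integrable_distr_eq[OF X, of "\<lambda>x. x^2"] by (simp add: law)
  have mean: "expectation (X i) = m" for i
    unfolding m_def law[of i, symmetric] by (simp add: integral_distr)
  have variance: "variance (X i) = \<sigma>^2" for i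
    using var unfolding mean m_def[symmetric] by (simp add: integral_distr flip: law[of i])
  define s where "s n = sqrt (real n * \<sigma>^2)" for n :: nat
  define Z where "Z n = distr M borel (\<lambda>\<omega>. (\<Sum>i<n. X i \<omega> - m) / s n)" for n
  define D where "D n = distr M borel (\<lambda>\<omega>. \<Sum>i<n. X i \<omega>)" for n
  have Z_affine: "Z n = distr (D n) borel (\<lambda>y. (1 / s n) * y + - (real n * m) / s n)" for n
    unfolding Z_def D_def
    by (subst distr_distr) (auto simp: comp_def sum_subtractf diff_divide_distrib intro: distr_cong)
  have D: "D n \<in> finvar_dists" for n
    unfolding D_def using law \<mu> by (intro finvar_dists_distr_sum) simp_all
  have "\<forall>n. Z n \<in> finvar_dists"
    unfolding Z_affine by (intro allI finvar_dists_distr_affine D)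
  moreover have "weak_conv_m Z std_normal_distribution"
    using central_limit_theorem[OF indep mean \<sigma> square_integrable variance law]
    unfolding Z_def[abs_def] s_def .
  ultimately have "(\<lambda>n. T (Z n)) \<longlonglongrightarrow> 0"
    using cont T0 by simp
  moreover have "T (Z n) = sqrt (real n) * ((T \<mu> - m) / \<sigma>)" for n
  proof -
    have "T (Z n) = (1 / s n) * T (D n) + - (real n * m) / s n"
      using loc D unfolding Z_affine location_measure_def by blast
    also have "\<dots> = sqrt (real n) * ((T \<mu> - m) / \<sigma>)"
      \<comment> \<open>for \<open>n = 0\<close> both sides are \<open>0\<close>, because division by \<open>s 0 = 0\<close> yields \<open>0\<close>\<close>
      using additive_location_distr_sum[OF loc add indep law \<mu>, of n] \<sigma>
      by (cases "n = 0") (simp_all add: D_def s_def real_sqrt_mult field_simps)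
    finally show ?thesis .
  qed
  ultimately have "(T \<mu> - m) / \<sigma> = 0"
    by (intro sqrt_real_mult_LIMSEQ_imp_zero) simp
  then show ?thesis
    using \<sigma> by (simp add: m_def)
qed

theorem theorem1:
  fixes T :: "real measure \<Rightarrow> real"
  assumes loc: "location_measure T"
    and add: "additive_location T"
    and cont: "\<And>Z. (\<forall>n. Z n \<in> finvar_dists) \<Longrightarrow> weak_conv_m Z std_normal_distribution \<Longrightarrow>
                 (\<lambda>n. T (Z n)) \<longlonglongrightarrow> T std_normal_distribution"
    and T0: "T std_normal_distribution = 0"
  shows "\<forall>M\<in>finvar_dists. T M = (\<integral>x. x \<partial>M)"
proof
  fix \<mu> assume \<mu>: "\<mu> \<in> finvar_dists"
  define m where "m = (\<integral>x. x \<partial>\<mu>)"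
  define v where "v = (\<integral>x. (x - m)^2 \<partial>\<mu>)"
  show "T \<mu> = m"
  proof (cases "v = 0")
    case True
    then have "AE x in \<mu>. x = m"
      unfolding v_def by (rule AE_eq_if_integral_square_diff_eq_0[OF finvar_distsD(4)[OF \<mu>]])
    then show ?thesis
      by (rule location_measure_AE_const[OF loc \<mu>])
  next
    case False
    have "v \<ge> 0"
      unfolding v_def by (rule Bochner_Integration.integral_nonneg) simp
    with False have \<sigma>: "sqrt v > 0"
      by simp
    have var: "(\<integral>x. (x - (\<integral>x. x \<partial>\<mu>))^2 \<partial>\<mu>) = (sqrt v)^2"
      using \<open>v \<ge> 0\<close> by (simp add: v_def m_def)
    obtain P :: "(nat \<Rightarrow> real) measure" and X :: "nat \<Rightarrow> (nat \<Rightarrow> real) \<Rightarrow> real"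
      where P: "prob_space P" and indep: "prob_space.indep_vars P (\<lambda>_. borel) X UNIV"
        and law: "\<And>i. distr P borel (X i) = \<mu>"
      using real_distribution_iid_sequence[OF finvar_distsD(1)[OF \<mu>]] by blast
    show ?thesis
      unfolding m_def
      by (rule prob_space.location_measure_eq_mean_if_iid[OF P loc add cont T0 indep law \<mu> \<sigma> var])
  qed
qed

end
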